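(* Let $\mathcal{G}_1(\mathbb{R}_{++})$ be the set of cumulative distribution functions of Borel probability measures on $\mathbb{R}$ supported in $\mathbb{R}_{++}$ (i.e. right-continuous non-decreasing $F:[0,\infty]\to[0,1]$ with $F(0)=0$, $F(\infty)=1$). Then \[ R_2=\inf_{F\in\mathcal{G}_1(\mathbb{R}_{++})}\ \sup_{x,y\in\mathbb{R}_{++}}\Big(1+y-\min\{1,1-\tfrac1x+y\}F(x)-yF(y)+\min\{1+\tfrac1x,1+y\}\max\{0,F(x)+F(y)-1\}\Big). \]
   Context: Scheduling on two machines with two tasks. A processing-time matrix is $T=(T_{ij})\in\mathbb{R}_{++}^{2\times 2}$. An allocation is $X\in\{0,1\}^{2\times2}$ with $X_{1j}+X_{2j}=1$; makespan $M(X,T)=\max_{i}\sum_j X_{ij}T_{ij}$; $M^*(T)=\min_X M(X,T)$. $\mathcal{P}_2$ is the set of Borel probability measures on $\mathbb{R}^2$ supported in $\mathbb{R}_{++}^2$. For $\mathbb{P}\in\mathcal{P}_2$, algorithm $\mathcal{A}^{\mathbb{P}}$ draws $(z_1,z_2)\sim\mathbb{P}$ and sends task $j$ to machine 1 iff $T_{1j}/T_{2j}<z_j$ (else to machine 2). $M(\mathbb{P},T)$ is the expected makespan, $R_2(\mathbb{P})=\sup_T M(\mathbb{P},T)/M^*(T)\in[1,\infty]$, and $R_2=\inf_{\mathbb{P}\in\mathcal{P}_2}R_2(\mathbb{P})$. *)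

theory Defs
  imports "HOL-Probability.Probability"
begin

(* Processing-time matrices: T :: nat => nat => real, only entries T i j with i,j in {1,2} matter. *)
definition pos_matrix :: "(nat \<Rightarrow> nat \<Rightarrow> real) \<Rightarrow> bool" where
  "pos_matrix T \<longleftrightarrow> (\<forall>i\<in>{1,2}. \<forall>j\<in>{1,2}. T i j > 0)"

(* An allocation X in {0,1}^{2x2} with X_1j + X_2j = 1 is determined by a pair of booleans
   (b1,b2): b_j = True iff task j goes to machine 1. *)
definition alloc_mat :: "bool \<times> bool \<Rightarrow> nat \<Rightarrow> nat \<Rightarrow> real" where
  "alloc_mat b i j = (let t = (if j = 1 then fst b else snd b) in
     if i = 1 then (if t then 1 else 0) else (if t then 0 else 1))"

definition makespan :: "(nat \<Rightarrow> nat \<Rightarrow> real) \<Rightarrow> (nat \<Rightarrow> nat \<Rightarrow> real) \<Rightarrow> real" where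
  "makespan X T = max (\<Sum>j\<in>{1,2}. X 1 j * T 1 j) (\<Sum>j\<in>{1,2}. X 2 j * T 2 j)"

definition opt_makespan :: "(nat \<Rightarrow> nat \<Rightarrow> real) \<Rightarrow> real" where
  "opt_makespan T = Min ((\<lambda>b. makespan (alloc_mat b) T) ` UNIV)"

definition P2 :: "(real \<times> real) measure set" where
  "P2 = {P. prob_space P \<and> sets P = sets borel \<and> emeasure P ({0<..} \<times> {0<..}) = 1}"

definition alg_alloc :: "(nat \<Rightarrow> nat \<Rightarrow> real) \<Rightarrow> real \<times> real \<Rightarrow> bool \<times> bool" where
  "alg_alloc T z = (T 1 1 / T 2 1 < fst z, T 1 2 / T 2 2 < snd z)"

definition exp_makespan :: "(real \<times> real) measure \<Rightarrow> (nat \<Rightarrow> nat \<Rightarrow> real) \<Rightarrow> real" where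
  "exp_makespan P T = (\<integral>z. makespan (alloc_mat (alg_alloc T z)) T \<partial>P)"

definition ratio2 :: "(real \<times> real) measure \<Rightarrow> ereal" where
  "ratio2 P = (SUP T\<in>{T. pos_matrix T}. ereal (exp_makespan P T / opt_makespan T))"

definition R2 :: ereal where
  "R2 = (INF P\<in>P2. ratio2 P)"

definition G1_pos :: "(real \<Rightarrow> real) set" where
  "G1_pos = {(\<lambda>x. measure \<mu> {..x}) | \<mu>. prob_space \<mu> \<and> sets \<mu> = sets (borel :: real measure)
               \<and> emeasure \<mu> {0<..} = 1}"

definition thm7_obj :: "(real \<Rightarrow> real) \<Rightarrow> real \<Rightarrow> real \<Rightarrow> real" where
  "thm7_obj F x y = 1 + y - min 1 (1 - 1/x + y) * F x - y * F y
     + min (1 + 1/x) (1 + y) * max 0 (F x + F y - 1)"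

end

theory Submission
  imports Defs
begin

text \<open>Only three numbers of a threshold distribution enter its expected makespan on an instance:
  the probabilities \<open>q\<^sub>1, q\<^sub>2\<close> that each task goes to machine 2 and the probability
  \<open>q\<^sub>1\<^sub>2\<close> that both do, and the makespan is increasing in \<open>q\<^sub>1\<^sub>2\<close>. By Frechet's bound
  \<open>q\<^sub>1\<^sub>2 \<ge> max 0 (q\<^sub>1 + q\<^sub>2 - 1)\<close>, and the objective is convex in the distribution
  function, so averaging the two marginal distribution functions of an arbitrary threshold law
  gives an \<open>F\<close> whose objective at \<open>(x, y)\<close> is at most the mean of its expected makespans on
  \<open>[[1, y], [1/x, 1]]\<close> and on the same instance with the tasks exchanged, both of optimum at most 1.

  Conversely, the countermonotone coupling \<open>(Q U, Q (1 - U))\<close> of the quantile function of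
  \<open>F\<close> attains Frechet's bound, so its expected makespan on \<open>[[1, y], [1/x, 1]]\<close> is the
  objective. Every other instance reduces to these: the ratio is invariant under scaling, and an
  instance splits into pieces with the same column ratios on which the expected makespan is
  additive and the optimum superadditive.\<close>

section \<open>Expected makespan of a randomized allocation\<close>

text \<open>\<open>(a, b, c, d)\<close> stands for the instance \<open>[[a, b], [c, d]]\<close>.\<close>
definition opt4 :: "real \<Rightarrow> real \<Rightarrow> real \<Rightarrow> real \<Rightarrow> real" where
  "opt4 a b c d = min (min (a + b) (c + d)) (min (max a d) (max b c))"

text \<open>Expected makespan when task \<open>j\<close> goes to machine 2 with probability \<open>q\<^sub>j\<close> and both
  tasks go there with probability \<open>q\<^sub>1\<^sub>2\<close>.\<close>
definition mix_makespan :: "real \<Rightarrow> real \<Rightarrow> real \<Rightarrow> real \<Rightarrow> real \<Rightarrow> real \<Rightarrow> real \<Rightarrow> real" where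
  "mix_makespan q1 q2 q12 a b c d =
     (1 - q1 - q2 + q12) * (a + b) + q12 * (c + d) + (q2 - q12) * max a d + (q1 - q12) * max b c"

definition frechet_lower :: "real \<Rightarrow> real \<Rightarrow> real" where
  "frechet_lower q1 q2 = max 0 (q1 + q2 - 1)"

text \<open>Countermonotone thresholds: the joint probability is the lower Frechet bound.\<close>
abbreviation cm_makespan :: "real \<Rightarrow> real \<Rightarrow> real \<Rightarrow> real \<Rightarrow> real \<Rightarrow> real \<Rightarrow> real" where
  "cm_makespan q1 q2 \<equiv> mix_makespan q1 q2 (frechet_lower q1 q2)"

lemma frechet_lower_commute: "frechet_lower q1 q2 = frechet_lower q2 q1"
  unfolding frechet_lower_def by (simp add: add.commute)

lemma thm7_obj_eq_cm_makespan:
  "x > 0 \<Longrightarrow> thm7_obj F x y = cm_makespan (F x) (F y) 1 y (1/x) 1"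
  unfolding thm7_obj_def mix_makespan_def frechet_lower_def
  by (auto simp: min_def max_def algebra_simps add_divide_distrib diff_divide_distrib)

lemma opt4_pos: "a > 0 \<Longrightarrow> b > 0 \<Longrightarrow> c > 0 \<Longrightarrow> d > 0 \<Longrightarrow> opt4 a b c d > 0"
  unfolding opt4_def by (simp add: less_max_iff_disj)

lemma mix_makespan_scale:
  "t \<ge> 0 \<Longrightarrow> mix_makespan q1 q2 q12 (t*a) (t*b) (t*c) (t*d) = t * mix_makespan q1 q2 q12 a b c d"
proof -
  assume "t \<ge> 0"
  then have "max (t*a) (t*d) = t * max a d" "max (t*b) (t*c) = t * max b c"
    by (simp_all add: max_mult_distrib_left)
  then show ?thesis unfolding mix_makespan_def by (simp add: algebra_simps)
qed

lemma opt4_scale: "t \<ge> 0 \<Longrightarrow> opt4 (t*a) (t*b) (t*c) (t*d) = t * opt4 a b c d"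
  unfolding opt4_def by (simp add: max_mult_distrib_left min_mult_distrib_left flip: distrib_left)

lemma mix_makespan_swap: "mix_makespan q1 q2 q12 a b c d = mix_makespan q2 q1 q12 b a d c"
  unfolding mix_makespan_def by (simp add: algebra_simps max.commute)

lemma opt4_swap: "opt4 a b c d = opt4 b a d c"
  unfolding opt4_def by (simp add: add.commute max.commute min.commute min.left_commute)

lemma cm_makespan_swap: "cm_makespan q1 q2 a b c d = cm_makespan q2 q1 b a d c"
  by (metis mix_makespan_swap frechet_lower_commute)

lemma max_add_comonotone:
  "(x0 - y0) * (x1 - y1) \<ge> 0 \<Longrightarrow> max (x0 + x1) (y0 + y1) = max x0 y0 + max x1 (y1::real)"
  by (auto simp: max_def zero_le_mult_iff)

lemma mix_makespan_add:
  assumes "(a0 - d0) * (a1 - d1) \<ge> 0" "(b0 - c0) * (b1 - c1) \<ge> 0"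
  shows "mix_makespan q1 q2 q12 (a0 + a1) (b0 + b1) (c0 + c1) (d0 + d1) =
         mix_makespan q1 q2 q12 a0 b0 c0 d0 + mix_makespan q1 q2 q12 a1 b1 c1 d1"
  unfolding mix_makespan_def max_add_comonotone[OF assms(1)] max_add_comonotone[OF assms(2)]
  by (simp add: algebra_simps)

lemma min_add_le: "min x0 y0 + min x1 y1 \<le> min (x0 + x1) (y0 + (y1::real))"
  by (simp add: min_def)

lemma opt4_superadd:
  assumes "(a0 - d0) * (a1 - d1) \<ge> 0" "(b0 - c0) * (b1 - c1) \<ge> 0"
  shows "opt4 a0 b0 c0 d0 + opt4 a1 b1 c1 d1 \<le> opt4 (a0 + a1) (b0 + b1) (c0 + c1) (d0 + d1)"
  unfolding opt4_def max_add_comonotone[OF assms(1)] max_add_comonotone[OF assms(2)]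
  by (smt (verit) min_add_le min.mono)

lemma mix_makespan_le_opt4_add:
  assumes "(a0 - d0) * (a1 - d1) \<ge> 0" "(b0 - c0) * (b1 - c1) \<ge> 0" "S \<ge> 0"
    and "mix_makespan q1 q2 q12 a0 b0 c0 d0 \<le> S * opt4 a0 b0 c0 d0"
    and "mix_makespan q1 q2 q12 a1 b1 c1 d1 \<le> S * opt4 a1 b1 c1 d1"
  shows "mix_makespan q1 q2 q12 (a0 + a1) (b0 + b1) (c0 + c1) (d0 + d1)
           \<le> S * opt4 (a0 + a1) (b0 + b1) (c0 + c1) (d0 + d1)"
proof -
  have "mix_makespan q1 q2 q12 (a0 + a1) (b0 + b1) (c0 + c1) (d0 + d1)
          \<le> S * (opt4 a0 b0 c0 d0 + opt4 a1 b1 c1 d1)"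
    using assms(4,5) by (simp add: mix_makespan_add[OF assms(1,2)] distrib_left)
  also have "\<dots> \<le> S * opt4 (a0 + a1) (b0 + b1) (c0 + c1) (d0 + d1)"
    using opt4_superadd[OF assms(1,2)] assms(3) by (rule mult_left_mono)
  finally show ?thesis .
qed

lemma mix_makespan_single_task:
  "a \<ge> 0 \<Longrightarrow> c \<ge> 0 \<Longrightarrow> mix_makespan q1 q2 q12 a 0 c 0 = (1 - q1) * a + q1 * c"
  unfolding mix_makespan_def by (simp add: max_def algebra_simps)

lemma mix_makespan_mono_joint:
  assumes "q12 \<le> q12'" "a \<ge> 0" "b \<ge> 0" "c \<ge> 0" "d \<ge> 0"
  shows "mix_makespan q1 q2 q12 a b c d \<le> mix_makespan q1 q2 q12' a b c d"
proof -
  have "0 \<le> (q12' - q12) * (a + b + c + d - max a d - max b c)"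
    using assms by (intro mult_nonneg_nonneg) (auto simp: max_def)
  then show ?thesis unfolding mix_makespan_def by (simp add: algebra_simps)
qed

lemma cm_makespan_midpoint_convex:
  assumes "a \<ge> 0" "b \<ge> 0" "c \<ge> 0" "d \<ge> 0"
  shows "cm_makespan ((q1 + q1') / 2) ((q2 + q2') / 2) a b c d
           \<le> (cm_makespan q1 q2 a b c d + cm_makespan q1' q2' a b c d) / 2"
proof -
  have "frechet_lower ((q1 + q1') / 2) ((q2 + q2') / 2) \<le> (frechet_lower q1 q2 + frechet_lower q1' q2') / 2"
    unfolding frechet_lower_def by (auto simp: max_def field_simps)
  from mult_right_mono[OF this, of "a + b + c + d - max a d - max b c"]
  show ?thesis using assms unfolding mix_makespan_def by (auto simp: max_def field_simps)
qed

text \<open>Allocation by allocation, each cost of the instance \<open>(1, y, 1/x, 1)\<close> is at most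
  \<open>max y (1/x)\<close> times the matching cost of the instance \<open>(1, x, 1/y, 1)\<close>.\<close>
lemma cm_makespan_le_transposed:
  assumes q: "0 \<le> q1" "q1 \<le> 1" "0 \<le> q2" "q2 \<le> 1" and xy: "x > 1" "0 < y" "y < 1"
  shows "cm_makespan q1 q2 1 y (1/x) 1 \<le> max y (1/x) * cm_makespan q2 q1 1 x (1/y) 1"
proof -
  define M where "M = frechet_lower q1 q2"
  define m where "m = max y (1/x)"
  have coeffs: "0 \<le> 1 - q1 - q2 + M" "0 \<le> M" "0 \<le> q2 - M" "0 \<le> q1 - M"
    using q unfolding M_def frechet_lower_def by auto
  have m: "y \<le> m" "1 \<le> m * x" "1/x \<le> m" "1 \<le> m / y"
    using xy unfolding m_def by (auto simp: max_def field_simps)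
  have "m * x \<le> m * max x (1/y)"
    using xy unfolding m_def by (intro mult_left_mono) auto
  then have costs: "1 + y \<le> m * (1 + x)" "1/x + 1 \<le> m * (1/y + 1)" "1 \<le> m * max x (1/y)"
    using m by (simp_all add: algebra_simps)
  have "cm_makespan q1 q2 1 y (1/x) 1
          = (1 - q1 - q2 + M) * (1 + y) + M * (1/x + 1) + (q2 - M) * 1 + (q1 - M) * m"
    unfolding mix_makespan_def M_def m_def by simp
  also have "\<dots> \<le> (1 - q1 - q2 + M) * (m * (1 + x)) + M * (m * (1/y + 1))
                   + (q2 - M) * (m * max x (1/y)) + (q1 - M) * m"
    using coeffs costs by (intro add_mono mult_left_mono) auto
  also have "\<dots> = m * cm_makespan q2 q1 1 x (1/y) 1"
    unfolding mix_makespan_def M_def frechet_lower_commute[of q1] by (simp add: algebra_simps)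
  finally show ?thesis unfolding m_def .
qed

section \<open>Reduction to normalized instances\<close>

context
  fixes F :: "real \<Rightarrow> real" and S :: real
  assumes F_nonneg: "\<And>x. 0 \<le> F x" and F_le_1: "\<And>x. F x \<le> 1"
    and F_small: "\<And>e. e > 0 \<Longrightarrow> \<exists>x>0. F x < e"
    and obj_le: "\<And>x y. x > 0 \<Longrightarrow> y > 0 \<Longrightarrow> thm7_obj F x y \<le> S"
begin

lemma single_task_bound:
  assumes r: "r > 0"
  shows "(1 - F r) * r + F r \<le> S * min r 1"
proof (cases "r \<le> 1")
  case True
  have "1 - (1 - 1/r) * F r \<le> S + e" if e: "e > 0" for e
  proof -
    have "min 1 (1 - 1/r + e) * F r \<le> (1 - 1/r + e) * F r"
      using F_nonneg[of r] by (intro mult_right_mono) auto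
    moreover have "e * F r \<le> e" "e * F e \<le> e"
      using F_le_1 e by (simp_all add: mult_left_le)
    moreover have "0 \<le> min (1 + 1/r) (1 + e) * max 0 (F r + F e - 1)"
      using r e by (intro mult_nonneg_nonneg) auto
    ultimately show ?thesis using obj_le[OF r e] unfolding thm7_obj_def by (simp add: algebra_simps)
  qed
  then have "1 - (1 - 1/r) * F r \<le> S"
    by (rule field_le_epsilon)
  then have "r * (1 - (1 - 1/r) * F r) \<le> r * S"
    using r by (rule mult_left_mono[OF _ less_imp_le])
  then show ?thesis using r True by (simp add: min_def algebra_simps)
next
  case False
  have "(1 - F r) * r + F r \<le> S + e" if e: "e > 0" for e
  proof -
    obtain x where x: "x > 0" "F x < e" using F_small[OF e] by blast
    have "min 1 (1 - 1/x + r) * F x \<le> 1 * F x"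
      using F_nonneg[of x] by (intro mult_right_mono) auto
    moreover have "0 \<le> min (1 + 1/x) (1 + r) * max 0 (F x + F r - 1)"
      using x r by (intro mult_nonneg_nonneg) auto
    ultimately show ?thesis using obj_le[OF x(1) r] x(2) F_le_1[of r]
      unfolding thm7_obj_def by (simp add: algebra_simps)
  qed
  then have "(1 - F r) * r + F r \<le> S"
    by (rule field_le_epsilon)
  then show ?thesis using False by simp
qed

lemma bound_ge_1: "S \<ge> 1"
  using single_task_bound[of 1] by simp

text \<open>If \<open>max y (1/x) < 1\<close>, the optimum is \<open>max y (1/x)\<close> and the objective at \<open>(y, x)\<close>
  is used instead of the one at \<open>(x, y)\<close>.\<close>
lemma normalized_bound:
  assumes x: "x > 0" and y: "y > 0"
  shows "cm_makespan (F x) (F y) 1 y (1/x) 1 \<le> S * opt4 1 y (1/x) 1"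
proof (cases "max y (1/x) \<ge> 1")
  case True
  moreover have "1 \<le> min (1 + y) (1/x + 1)" using x y by simp
  ultimately have "opt4 1 y (1/x) 1 = 1" unfolding opt4_def by (simp add: min_def)
  then show ?thesis using obj_le[OF x y] thm7_obj_eq_cm_makespan[OF x, of F y] by simp
next
  case False
  then have "1/x < 1" and y1: "y < 1" by auto
  then have x1: "x > 1" using x by (simp add: divide_less_eq)
  have "0 < 1/x" using x by simp
  then have "max y (1/x) \<le> min (1 + y) (1/x + 1)" using y \<open>1/x < 1\<close> y1 by (smt (verit))
  moreover have "min (max 1 1) (max y (1/x)) = max y (1/x)" using False by simp
  ultimately have opt: "opt4 1 y (1/x) 1 = max y (1/x)"
    unfolding opt4_def by (simp add: min.absorb2)
  have "cm_makespan (F x) (F y) 1 y (1/x) 1 \<le> max y (1/x) * cm_makespan (F y) (F x) 1 x (1/y) 1"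
    using F_nonneg F_le_1 x1 y y1 by (intro cm_makespan_le_transposed) auto
  also have "\<dots> \<le> max y (1/x) * S"
    using obj_le[OF y x] thm7_obj_eq_cm_makespan[OF y, of F x] y by (intro mult_left_mono) auto
  finally show ?thesis unfolding opt by (simp add: mult.commute)
qed

lemma balanced_bound:
  assumes pos: "a > 0" "b > 0" "c > 0" "d > 0" and balanced: "a = d \<or> b = c"
  shows "cm_makespan (F (a/c)) (F (b/d)) a b c d \<le> S * opt4 a b c d"
proof -
  have diagonal: "cm_makespan (F (a/c)) (F (b/a)) a b c a \<le> S * opt4 a b c a"
    if "a > 0" "b > 0" "c > 0" for a b c
  proof -
    have "cm_makespan (F (a/c)) (F (b/a)) a b c a
            = cm_makespan (F (a/c)) (F (b/a)) (a*1) (a*(b/a)) (a*(1/(a/c))) (a*1)"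
      using that by simp
    also have "\<dots> = a * cm_makespan (F (a/c)) (F (b/a)) 1 (b/a) (1/(a/c)) 1"
      using that by (intro mix_makespan_scale) simp
    also have "\<dots> \<le> a * (S * opt4 1 (b/a) (1/(a/c)) 1)"
      using normalized_bound[of "a/c" "b/a"] that by (intro mult_left_mono) auto
    also have "\<dots> = S * opt4 (a*1) (a*(b/a)) (a*(1/(a/c))) (a*1)"
      using that by (simp only: opt4_scale[OF less_imp_le[OF that(1)]] mult.left_commute)
    finally show ?thesis using that by simp
  qed
  from balanced show ?thesis
  proof
    assume "a = d" then show ?thesis using diagonal[OF pos(1-3)] by simp
  next
    assume "b = c" then show ?thesis
      using diagonal[OF pos(2,1,4)] cm_makespan_swap opt4_swap by metis
  qed
qed

lemma single_task_bound_scaled: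
  assumes "a > 0" "c > 0" "t \<ge> 0"
  shows "cm_makespan (F (a/c)) q (t*a) 0 (t*c) 0 \<le> S * opt4 (t*a) 0 (t*c) 0"
proof -
  have "t * a \<ge> 0" "t * c \<ge> 0" using assms by simp_all
  then have "opt4 (t*a) 0 (t*c) 0 = t * min a c"
    using assms unfolding opt4_def by (simp add: min_mult_distrib_left)
  also have "min a c = c * min (a/c) 1"
    using assms by (simp add: min_mult_distrib_left)
  finally have "opt4 (t*a) 0 (t*c) 0 = t * (c * min (a/c) 1)" .
  moreover have "cm_makespan (F (a/c)) q (t*a) 0 (t*c) 0 = t * (c * ((1 - F (a/c)) * (a/c) + F (a/c)))"
    using assms by (simp add: mix_makespan_single_task field_simps)
  moreover have "\<dots> \<le> t * (c * (S * min (a/c) 1))"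
    using single_task_bound[of "a/c"] assms by (intro mult_left_mono) auto
  ultimately show ?thesis by (simp add: ac_simps)
qed

text \<open>Split off \<open>(1 - l) (a, 0, c, 0)\<close>, leaving a balanced instance with the same ratios.\<close>
lemma dominated_bound:
  assumes pos: "a > 0" "b > 0" "c > 0" "d > 0" and dom: "d \<le> a" "b \<le> c"
  shows "cm_makespan (F (a/c)) (F (b/d)) a b c d \<le> S * opt4 a b c d"
proof -
  define l where "l = max (d/a) (b/c)"
  have l: "0 < l" "l \<le> 1" "d \<le> l * a" "b \<le> l * c" "l * a = d \<or> b = l * c"
    using pos dom unfolding l_def by (auto simp: max_def field_simps)
  have "cm_makespan (F ((l*a)/(l*c))) (F (b/d)) (l*a) b (l*c) d \<le> S * opt4 (l*a) b (l*c) d"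
    using pos l by (intro balanced_bound) auto
  then have balanced: "cm_makespan (F (a/c)) (F (b/d)) (l*a) b (l*c) d \<le> S * opt4 (l*a) b (l*c) d"
    using l(1) by simp
  have single: "cm_makespan (F (a/c)) (F (b/d)) ((1-l)*a) 0 ((1-l)*c) 0 \<le> S * opt4 ((1-l)*a) 0 ((1-l)*c) 0"
    using single_task_bound_scaled pos l by simp
  have "(l*a - d) * ((1-l)*a - 0) \<ge> 0"
    using pos l by simp
  moreover have "(b - l*c) * (0 - (1-l)*c) \<ge> 0"
    using pos l by (intro mult_nonpos_nonpos) auto
  ultimately show ?thesis
    using mix_makespan_le_opt4_add[OF _ _ order_trans[OF zero_le_one bound_ge_1] balanced single]
    by (simp add: algebra_simps)
qed

text \<open>With \<open>s = c d / b\<close>, split \<open>(a, b, c, d)\<close> into \<open>l (a, a b / d, c, a)\<close> and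
  \<open>(1 - l) (a, c, c, s)\<close>: both pieces are balanced with the ratios of the original instance,
  and \<open>0 < l < 1\<close> because \<open>d\<close> lies strictly between \<open>a\<close> and \<open>s\<close>.\<close>
lemma crossing_bound:
  assumes pos: "a > 0" "b > 0" "c > 0" "d > 0" and cross: "(d < a \<and> c < b) \<or> (a < d \<and> b < c)"
  shows "cm_makespan (F (a/c)) (F (b/d)) a b c d \<le> S * opt4 a b c d"
proof -
  define s where "s = c * d / b"
  define l where "l = (d - s) / (a - s)"
  have s: "s > 0" "(d < a \<and> s < d) \<or> (a < d \<and> d < s)"
    using pos cross unfolding s_def by (auto simp: field_simps)
  then have l: "0 < l" "l < 1" "l * a + (1 - l) * s = d"
    unfolding l_def by (auto simp: field_simps)
  have "l * (a * b / d) + (1 - l) * c = b / d * (l * a + (1 - l) * s)"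
    using pos unfolding s_def by (simp add: field_simps)
  then have sum_b: "l * (a * b / d) + (1 - l) * c = b"
    using pos l(3) by simp
  have "cm_makespan (F ((l*a)/(l*c))) (F ((l*(a*b/d))/(l*a))) (l*a) (l*(a*b/d)) (l*c) (l*a)
          \<le> S * opt4 (l*a) (l*(a*b/d)) (l*c) (l*a)"
    using pos l by (intro balanced_bound) auto
  moreover have "(l*a)/(l*c) = a/c" "(l*(a*b/d))/(l*a) = b/d"
    using pos l by auto
  ultimately have piece1: "cm_makespan (F (a/c)) (F (b/d)) (l*a) (l*(a*b/d)) (l*c) (l*a)
          \<le> S * opt4 (l*a) (l*(a*b/d)) (l*c) (l*a)"
    by simp
  have "cm_makespan (F (((1-l)*a)/((1-l)*c))) (F (((1-l)*c)/((1-l) * s))) ((1-l)*a) ((1-l)*c) ((1-l)*c) ((1-l) * s)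
          \<le> S * opt4 ((1-l)*a) ((1-l)*c) ((1-l)*c) ((1-l) * s)"
    using pos l s by (intro balanced_bound) auto
  moreover have "((1-l)*a)/((1-l)*c) = a/c" "((1-l)*c)/((1-l) * s) = b/d"
    using pos l unfolding s_def by auto
  ultimately have piece2: "cm_makespan (F (a/c)) (F (b/d)) ((1-l)*a) ((1-l)*c) ((1-l)*c) ((1-l) * s)
          \<le> S * opt4 ((1-l)*a) ((1-l)*c) ((1-l)*c) ((1-l) * s)"
    by simp
  have "(l*a - l*a) * ((1-l)*a - (1-l) * s) \<ge> 0" "(l*(a*b/d) - l*c) * ((1-l)*c - (1-l)*c) \<ge> 0"
    by simp_all
  from mix_makespan_le_opt4_add[OF this order_trans[OF zero_le_one bound_ge_1] piece1 piece2]
  show ?thesis unfolding sum_b l(3) by (simp add: algebra_simps)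
qed

lemma instance_bound:
  assumes pos: "a > 0" "b > 0" "c > 0" "d > 0"
  shows "cm_makespan (F (a/c)) (F (b/d)) a b c d \<le> S * opt4 a b c d"
proof -
  consider "d \<le> a \<and> b \<le> c" | "a \<le> d \<and> c \<le> b" | "(d < a \<and> c < b) \<or> (a < d \<and> b < c)"
    by linarith
  then show ?thesis
  proof cases
    case 1 then show ?thesis using dominated_bound[OF pos] by blast
  next
    case 2 then show ?thesis
      using dominated_bound[of b a d c] pos cm_makespan_swap opt4_swap by metis
  next
    case 3 then show ?thesis using crossing_bound[OF pos] by blast
  qed
qed

end

section \<open>Instances and randomized thresholds\<close>

definition mat2 :: "real \<Rightarrow> real \<Rightarrow> real \<Rightarrow> real \<Rightarrow> nat \<Rightarrow> nat \<Rightarrow> real" where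
  "mat2 a b c d = (\<lambda>i j. if i = 1 then (if j = 1 then a else b) else (if j = 1 then c else d))"

lemma pos_matrix_mat2: "a > 0 \<Longrightarrow> b > 0 \<Longrightarrow> c > 0 \<Longrightarrow> d > 0 \<Longrightarrow> pos_matrix (mat2 a b c d)"
  unfolding pos_matrix_def mat2_def by auto

lemma makespan_alloc_mat:
  assumes "pos_matrix T"
  shows "makespan (alloc_mat (True, True)) T = T 1 1 + T 1 2"
    and "makespan (alloc_mat (False, False)) T = T 2 1 + T 2 2"
    and "makespan (alloc_mat (True, False)) T = max (T 1 1) (T 2 2)"
    and "makespan (alloc_mat (False, True)) T = max (T 1 2) (T 2 1)"
  using assms unfolding makespan_def alloc_mat_def pos_matrix_def by (auto simp: max_def)

lemma makespan_alloc_mat_nonneg: "pos_matrix T \<Longrightarrow> 0 \<le> makespan (alloc_mat b) T"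
  by (cases b; cases "fst b"; cases "snd b")
     (auto simp: makespan_alloc_mat pos_matrix_def le_max_iff_disj)

lemma opt_makespan_eq_opt4:
  assumes "pos_matrix T"
  shows "opt_makespan T = opt4 (T 1 1) (T 1 2) (T 2 1) (T 2 2)"
proof -
  have U: "(UNIV :: (bool \<times> bool) set) = {(True, True), (False, False), (True, False), (False, True)}"
    by (auto simp: UNIV_bool)
  show ?thesis
    unfolding opt_makespan_def opt4_def U by (simp add: makespan_alloc_mat[OF assms] min.assoc)
qed

lemma exp_makespan_le_ratio2:
  assumes T: "pos_matrix T" and opt: "opt_makespan T \<le> 1"
  shows "ereal (exp_makespan P T) \<le> ratio2 P"
proof -
  have "0 < opt_makespan T"
    using T unfolding opt_makespan_eq_opt4[OF T] pos_matrix_def by (intro opt4_pos) auto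
  moreover have "0 \<le> exp_makespan P T"
    unfolding exp_makespan_def by (intro integral_nonneg_AE AE_I2 makespan_alloc_mat_nonneg[OF T])
  ultimately have "exp_makespan P T \<le> exp_makespan P T / opt_makespan T"
    using opt by (simp add: le_divide_eq mult_left_le)
  also have "ereal (exp_makespan P T / opt_makespan T) \<le> ratio2 P"
    unfolding ratio2_def using T by (intro SUP_upper) auto
  finally show ?thesis by simp
qed

lemma sets_borel_fst_le [measurable]: "{z::real \<times> real. fst z \<le> r} \<in> sets borel"
  by (intro borel_closed closed_Collect_le continuous_intros)

lemma sets_borel_snd_le [measurable]: "{z::real \<times> real. snd z \<le> r} \<in> sets borel"
  by (intro borel_closed closed_Collect_le continuous_intros)

lemma sets_borel_fst_snd_le [measurable]:
  "{z::real \<times> real. fst z \<le> r1 \<and> snd z \<le> r2} \<in> sets borel"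
  by (intro borel_closed closed_Collect_conj closed_Collect_le continuous_intros)

text \<open>Task \<open>j\<close> goes to machine 2 iff \<open>z\<^sub>j \<le> T 1 j / T 2 j\<close>, so only these three
  probabilities of the threshold distribution matter.\<close>
lemma exp_makespan_eq_mix_makespan:
  assumes P: "prob_space P" "sets P = sets borel" and T: "pos_matrix T"
  defines "r1 \<equiv> T 1 1 / T 2 1" and "r2 \<equiv> T 1 2 / T 2 2"
  shows "exp_makespan P T = mix_makespan (measure P {z. fst z \<le> r1}) (measure P {z. snd z \<le> r2})
           (measure P {z. fst z \<le> r1 \<and> snd z \<le> r2}) (T 1 1) (T 1 2) (T 2 1) (T 2 2)"
proof -
  interpret prob_space P by fact
  define A where "A = {z::real \<times> real. fst z \<le> r1}"
  define B where "B = {z::real \<times> real. snd z \<le> r2}"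
  define a b c d where "a = T 1 1" and "b = T 1 2" and "c = T 2 1" and "d = T 2 2"
  have sets: "A \<in> sets P" "B \<in> sets P" "A \<inter> B \<in> sets P"
    unfolding A_def B_def P(2) by measurable
  have "makespan (alloc_mat (alg_alloc T z)) T =
     (a + b) + (max b c - (a + b)) * indicator A z + (max a d - (a + b)) * indicator B z
       + (c + d - max b c - max a d + (a + b)) * indicator (A \<inter> B) z" for z
    unfolding alg_alloc_def A_def B_def r1_def r2_def a_def b_def c_def d_def
    by (cases "T 1 1 / T 2 1 < fst z"; cases "T 1 2 / T 2 2 < snd z")
       (auto simp: makespan_alloc_mat[OF T] indicator_def)
  then have "exp_makespan P T = (\<integral>z. (a + b) + (max b c - (a + b)) * indicator A z
       + (max a d - (a + b)) * indicator B z + (c + d - max b c - max a d + (a + b)) * indicator (A \<inter> B) z \<partial>P)"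
    unfolding exp_makespan_def by simp
  also have "\<dots> = (a + b) + (max b c - (a + b)) * measure P A + (max a d - (a + b)) * measure P B
       + (c + d - max b c - max a d + (a + b)) * measure P (A \<inter> B)"
    using sets by (simp add: integral_add integral_mult_right_zero prob_space emeasure_eq_measure)
  finally show ?thesis
    unfolding mix_makespan_def A_def B_def a_def b_def c_def d_def Int_def
    by (simp add: algebra_simps)
qed

lemma (in prob_space) frechet_lower_le_prob_Int:
  assumes "A \<in> events" "B \<in> events"
  shows "frechet_lower (prob A) (prob B) \<le> prob (A \<inter> B)"
proof -
  have "prob (A \<union> B) = prob A + prob B - prob (A \<inter> B)"
    using assms by (intro measure_Un3) (auto simp: fmeasurable_def less_top[symmetric])
  then show ?thesis using prob_le_1[of "A \<union> B"] unfolding frechet_lower_def by simp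
qed

lemma cm_makespan_le_exp_makespan:
  assumes P: "prob_space P" "sets P = sets borel" and T: "pos_matrix T"
  shows "cm_makespan (measure P {z. fst z \<le> T 1 1 / T 2 1}) (measure P {z. snd z \<le> T 1 2 / T 2 2})
           (T 1 1) (T 1 2) (T 2 1) (T 2 2) \<le> exp_makespan P T"
proof -
  interpret prob_space P by fact
  have "frechet_lower (measure P {z. fst z \<le> T 1 1 / T 2 1}) (measure P {z. snd z \<le> T 1 2 / T 2 2})
          \<le> measure P ({z. fst z \<le> T 1 1 / T 2 1} \<inter> {z. snd z \<le> T 1 2 / T 2 2})"
    unfolding P(2) by (intro frechet_lower_le_prob_Int) (simp_all add: P(2))
  then show ?thesis
    unfolding exp_makespan_eq_mix_makespan[OF P T] Int_def
    using T unfolding pos_matrix_def by (intro mix_makespan_mono_joint) auto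
qed

section \<open>Distribution functions supported in the positive reals\<close>

definition pos_cdf :: "(real \<Rightarrow> real) \<Rightarrow> bool" where
  "pos_cdf F \<longleftrightarrow> mono F \<and> (\<forall>a. continuous (at_right a) F) \<and> (\<forall>x\<le>0. F x = 0) \<and> (F \<longlongrightarrow> 1) at_top"

lemma G1_posD:
  assumes "F \<in> G1_pos"
  shows "pos_cdf F"
proof -
  obtain \<mu> where F: "F = (\<lambda>x. measure \<mu> {..x})" and "prob_space \<mu>" "sets \<mu> = sets borel"
    and pos: "emeasure \<mu> {0<..} = 1"
    using assms unfolding G1_pos_def by blast
  then interpret real_distribution \<mu> by (simp add: real_distribution_def real_distribution_axioms_def)
  have F_cdf: "F = cdf \<mu>" unfolding F cdf_def ..
  have "measure \<mu> {..0} = 0"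
    using prob_compl[of "{0<..}"] pos by (simp add: emeasure_eq_measure Compl_eq_Diff_UNIV[symmetric])
  then have "F x = 0" if "x \<le> 0" for x
    using that finite_measure_mono[of "{..x}" "{..0}"] unfolding F by (simp add: antisym)
  then show ?thesis
    unfolding pos_cdf_def F_cdf
    using cdf_nondecreasing cdf_is_right_cont cdf_lim_at_top_prob by (auto intro: monoI)
qed

lemma G1_posI:
  assumes "pos_cdf F"
  shows "F \<in> G1_pos"
proof -
  have mono: "\<And>x y. x \<le> y \<Longrightarrow> F x \<le> F y" and right_cont: "\<And>a. continuous (at_right a) F"
    and zero: "\<And>x. x \<le> 0 \<Longrightarrow> F x = 0" and top: "(F \<longlongrightarrow> 1) at_top"
    using assms unfolding pos_cdf_def by (auto dest: monoD)
  have bot: "(F \<longlongrightarrow> 0) at_bot"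
    by (rule tendsto_eventually) (use zero in \<open>auto simp: eventually_at_bot_linorder\<close>)
  define \<mu> where "\<mu> = interval_measure F"
  interpret real_distribution \<mu>
    unfolding \<mu>_def by (rule real_distribution_interval_measure[OF mono right_cont bot top])
  have "emeasure \<mu> {..0} = 0"
    unfolding \<mu>_def using emeasure_interval_measure_Iic[OF mono right_cont bot] zero by simp
  then have "emeasure \<mu> {0<..} = 1"
    using emeasure_compl[of "{..0}" \<mu>] emeasure_space_1 by (simp add: Compl_eq_Diff_UNIV[symmetric])
  moreover have "F = (\<lambda>x. measure \<mu> {..x})"
    unfolding \<mu>_def using measure_interval_measure_Iic[OF mono right_cont bot] by simp
  ultimately show ?thesis unfolding G1_pos_def using prob_space_axioms by auto
qed

lemma pos_cdf_bounded:
  assumes "pos_cdf F"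
  shows "0 \<le> F x" and "F x \<le> 1"
proof -
  have mono: "\<And>x y. x \<le> y \<Longrightarrow> F x \<le> F y" and top: "(F \<longlongrightarrow> 1) at_top"
    and zero: "\<And>x. x \<le> 0 \<Longrightarrow> F x = 0"
    using assms unfolding pos_cdf_def by (auto dest: monoD)
  show "0 \<le> F x" using mono[of "min x 0" x] zero[of "min x 0"] by simp
  show "F x \<le> 1"
    by (rule tendsto_lowerbound[OF top]) (auto simp: eventually_at_top_linorder intro: mono)
qed

lemma pos_cdf_small:
  assumes "pos_cdf F" and e: "e > 0"
  shows "\<exists>x>0. F x < e"
proof -
  have "continuous (at_right 0) F" and "F 0 = 0"
    using assms unfolding pos_cdf_def by auto
  then have "(F \<longlongrightarrow> 0) (at_right 0)" unfolding continuous_within by simp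
  then have "eventually (\<lambda>x. F x < e) (at_right 0)" using e by (rule order_tendstoD)
  then obtain b where "b > 0" "\<And>y. 0 < y \<Longrightarrow> y < b \<Longrightarrow> F y < e"
    unfolding eventually_at_right_field by auto
  then show ?thesis by (intro exI[of _ "b/2"]) auto
qed

lemma pos_cdf_midpoint:
  assumes "pos_cdf F" "pos_cdf G"
  shows "pos_cdf (\<lambda>x. (F x + G x) / 2)"
  using assms unfolding pos_cdf_def continuous_within mono_def
  by (auto intro!: add_mono tendsto_eq_intros)

lemma marginal_cdf_in_G1_pos:
  assumes P: "P \<in> P2" and f: "f \<in> {fst, snd}"
  shows "(\<lambda>x. measure P {z. f z \<le> x}) \<in> G1_pos"
proof -
  have "prob_space P" and sets: "sets P = sets borel" and box: "emeasure P ({0<..} \<times> {0<..}) = 1"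
    using P unfolding P2_def by auto
  interpret prob_space P by fact
  have space: "space P = UNIV" using sets_eq_imp_space_eq[OF sets] by simp
  have "fst \<in> borel_measurable (borel :: (real \<times> real) measure)"
    "snd \<in> borel_measurable (borel :: (real \<times> real) measure)"
    by (intro borel_measurable_continuous_onI continuous_intros)+
  then have f_meas: "f \<in> borel_measurable P"
    using f unfolding measurable_cong_sets[OF sets refl] by blast
  have "{0<..} \<times> {0<..} \<subseteq> f -` {0<..} \<inter> space P"
    using f space by auto
  moreover have "f -` {0<..} \<inter> space P \<in> events"
    using f_meas by measurable
  ultimately have "1 \<le> emeasure P (f -` {0<..} \<inter> space P)"
    using box emeasure_mono by metis
  then have "emeasure (distr P borel f) {0<..} = 1"
    using emeasure_distr[OF f_meas, of "{0<..}"] emeasure_le_1 by (simp add: antisym)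
  moreover have "measure (distr P borel f) {..x} = measure P {z. f z \<le> x}" for x
    using measure_distr[OF f_meas, of "{..x}"] by (simp add: space vimage_def)
  moreover have "prob_space (distr P borel f)"
    by (rule prob_space_distr[OF f_meas])
  ultimately show ?thesis unfolding G1_pos_def by (auto intro!: exI[of _ "distr P borel f"])
qed

text \<open>The value outside \<open>(0, 1)\<close> is irrelevant: quantiles are only evaluated on \<open>(0, 1)\<close>.\<close>
definition quantile :: "(real \<Rightarrow> real) \<Rightarrow> real \<Rightarrow> real" where
  "quantile F u = (if 0 < u \<and> u < 1 then Inf {x. u \<le> F x} else 1)"

context
  fixes F :: "real \<Rightarrow> real"
  assumes F: "pos_cdf F"
begin

lemma quantile_set_nonempty_bdd:
  assumes "0 < u" "u < 1"
  shows "{x. u \<le> F x} \<noteq> {}" and "bdd_below {x. u \<le> F x}"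
proof -
  have "(F \<longlongrightarrow> 1) at_top" and zero: "\<And>x. x \<le> 0 \<Longrightarrow> F x = 0"
    using F unfolding pos_cdf_def by auto
  then have "eventually (\<lambda>x. F x > u) at_top" using assms(2) by (intro order_tendstoD)
  then obtain x where "F x > u" by (auto simp: eventually_at_top_linorder)
  then show "{x. u \<le> F x} \<noteq> {}" by (blast intro: less_imp_le)
  show "bdd_below {x. u \<le> F x}"
  proof (rule bdd_belowI)
    fix x assume "x \<in> {x. u \<le> F x}"
    then show "0 \<le> x" using zero[of x] assms(1) by (cases "x \<le> 0") auto
  qed
qed

lemma quantile_le_iff:
  assumes "0 < u" "u < 1"
  shows "quantile F u \<le> r \<longleftrightarrow> u \<le> F r"
proof
  have mono: "\<And>x y. x \<le> y \<Longrightarrow> F x \<le> F y" and cont: "continuous (at_right (quantile F u)) F"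
    using F unfolding pos_cdf_def by (auto dest: monoD)
  from cont have lim: "(F \<longlongrightarrow> F (quantile F u)) (at_right (quantile F u))"
    unfolding continuous_within .
  have "u \<le> F y" if y: "y > quantile F u" for y
  proof -
    obtain s where "u \<le> F s" "s < y"
      using y cInf_less_iff[OF quantile_set_nonempty_bdd[OF assms]] assms
      unfolding quantile_def by auto
    then show ?thesis using mono[of s y] by simp
  qed
  then have "u \<le> F (quantile F u)"
    by (intro tendsto_lowerbound[OF lim]) (auto simp: eventually_at_right_field intro: gt_ex)
  then show "quantile F u \<le> r \<Longrightarrow> u \<le> F r"
    using mono by (meson order_trans)
next
  show "u \<le> F r \<Longrightarrow> quantile F u \<le> r"
    unfolding quantile_def using assms quantile_set_nonempty_bdd[OF assms] by (auto intro: cInf_lower)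
qed

lemma quantile_pos: "0 < u \<Longrightarrow> u < 1 \<Longrightarrow> 0 < quantile F u"
  using quantile_le_iff[of u 0] F unfolding pos_cdf_def by auto

lemma borel_measurable_quantile [measurable]: "quantile F \<in> borel_measurable borel"
proof (rule borel_measurable_piecewise_mono[of "{{0<..<1}, -{0<..<1}}"])
  have "mono_on {0<..<1} (quantile F)"
    using quantile_le_iff by (intro mono_onI) (meson greaterThanLessThan_iff order.refl order_trans)
  moreover have "mono_on (-{0<..<1}) (quantile F)"
    unfolding quantile_def by (intro mono_onI) auto
  ultimately show "\<And>c. c \<in> {{0<..<1}, -{0<..<1}} \<Longrightarrow> mono_on c (quantile F)"
    by blast
qed auto

end

section \<open>The countermonotone coupling\<close>

lemma measure_lborel_between:
  assumes "l \<le> h" "S \<in> sets lborel" "{l<..<h} \<subseteq> S" "S \<subseteq> {l..h}"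
  shows "measure lborel S = h - l"
proof -
  have "emeasure lborel {l<..<h} \<le> emeasure lborel S"
    by (rule emeasure_mono[OF assms(3,2)])
  moreover have "emeasure lborel S \<le> emeasure lborel {l..h}"
    by (rule emeasure_mono[OF assms(4)]) simp
  ultimately have "emeasure lborel S = ennreal (h - l)" using assms(1) by (auto intro: antisym)
  then show ?thesis using assms(1) by (simp add: measure_def)
qed

definition countermono_coupling :: "(real \<Rightarrow> real) \<Rightarrow> (real \<times> real) measure" where
  "countermono_coupling F =
     distr (uniform_measure lborel {0<..<1}) borel (\<lambda>u. (quantile F u, quantile F (1 - u)))"

context
  fixes F :: "real \<Rightarrow> real"
  assumes F: "pos_cdf F"
begin

lemma measurable_quantile_pair:
  "(\<lambda>u. (quantile F u, quantile F (1 - u))) \<in> uniform_measure lborel {0<..<1} \<rightarrow>\<^sub>M borel"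
  using borel_measurable_quantile[OF F]
  by (simp add: measurable_cong_sets[OF sets_uniform_measure refl]) measurable

lemma prob_space_countermono_coupling: "prob_space (countermono_coupling F)"
  unfolding countermono_coupling_def
  by (intro prob_space.prob_space_distr prob_space_uniform_measure measurable_quantile_pair) auto

lemma sets_countermono_coupling: "sets (countermono_coupling F) = sets borel"
  unfolding countermono_coupling_def by simp

lemma measure_countermono_coupling:
  assumes "A \<in> sets borel"
  shows "measure (countermono_coupling F) A
           = measure lborel ({0<..<1} \<inter> {u. (quantile F u, quantile F (1 - u)) \<in> A})"
proof -
  have "{u. (quantile F u, quantile F (1 - u)) \<in> A} \<in> sets borel"
    using measurable_sets[OF measurable_quantile_pair assms] by (simp add: vimage_def)
  then show ?thesis
    unfolding countermono_coupling_def using measurable_quantile_pair assms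
    by (simp add: measure_distr measure_uniform_measure vimage_def Int_commute)
qed

lemma countermono_coupling_in_P2: "countermono_coupling F \<in> P2"
proof -
  interpret prob_space "countermono_coupling F"
    by (rule prob_space_countermono_coupling)
  have box: "{0<..} \<times> {0<..} \<in> sets (borel :: (real \<times> real) measure)"
    by (intro borel_open open_Times) auto
  have "{0<..<1} \<inter> {u. (quantile F u, quantile F (1 - u)) \<in> {0<..} \<times> {0<..}} = {0<..<1::real}"
    using quantile_pos[OF F] by fastforce
  then have "measure (countermono_coupling F) ({0<..} \<times> {0<..}) = 1"
    using measure_countermono_coupling[OF box] by simp
  then show ?thesis
    using sets_countermono_coupling prob_space_axioms unfolding P2_def by (simp add: emeasure_eq_measure)
qed

lemma exp_makespan_countermono_coupling:
  assumes T: "pos_matrix T"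
  shows "exp_makespan (countermono_coupling F) T
           = cm_makespan (F (T 1 1 / T 2 1)) (F (T 1 2 / T 2 2)) (T 1 1) (T 1 2) (T 2 1) (T 2 2)"
proof -
  have "measure (countermono_coupling F) {z. fst z \<le> r1} = F r1"
    and "measure (countermono_coupling F) {z. snd z \<le> r2} = F r2"
    and "measure (countermono_coupling F) {z. fst z \<le> r1 \<and> snd z \<le> r2} = frechet_lower (F r1) (F r2)"
    for r1 r2
  proof -
    have "{0<..<1} \<inter> {u. (quantile F u, quantile F (1 - u)) \<in> {z. fst z \<le> r1}} = {0<..<1} \<inter> {..F r1}"
      and "{0<..<1} \<inter> {u. (quantile F u, quantile F (1 - u)) \<in> {z. snd z \<le> r2}} = {0<..<1} \<inter> {1 - F r2..}"
      and "{0<..<1} \<inter> {u. (quantile F u, quantile F (1 - u)) \<in> {z. fst z \<le> r1 \<and> snd z \<le> r2}}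
             = {0<..<1} \<inter> {..F r1} \<inter> {1 - F r2..}"
      using quantile_le_iff[OF F] by auto
    moreover have "measure lborel ({0<..<1} \<inter> {..F r1}) = F r1 - 0"
      using pos_cdf_bounded[OF F, of r1] by (intro measure_lborel_between) auto
    moreover have "measure lborel ({0<..<1} \<inter> {1 - F r2..}) = 1 - (1 - F r2)"
      using pos_cdf_bounded[OF F, of r2] by (intro measure_lborel_between) auto
    moreover have "measure lborel ({0<..<1} \<inter> {..F r1} \<inter> {1 - F r2..}) = frechet_lower (F r1) (F r2)"
    proof (cases "F r1 + F r2 \<ge> 1")
      case True
      then show ?thesis
        unfolding frechet_lower_def using pos_cdf_bounded[OF F, of r1] pos_cdf_bounded[OF F, of r2]
        by (subst measure_lborel_between[of "1 - F r2" "F r1"]) auto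
    next
      case False
      then have "{0<..<1} \<inter> {..F r1} \<inter> {1 - F r2..} = {}" by auto
      then show ?thesis using False unfolding frechet_lower_def by simp
    qed
    ultimately show "measure (countermono_coupling F) {z. fst z \<le> r1} = F r1"
      and "measure (countermono_coupling F) {z. snd z \<le> r2} = F r2"
      and "measure (countermono_coupling F) {z. fst z \<le> r1 \<and> snd z \<le> r2} = frechet_lower (F r1) (F r2)"
      by (simp_all add: measure_countermono_coupling)
  qed
  then show ?thesis
    by (simp add: exp_makespan_eq_mix_makespan[OF prob_space_countermono_coupling sets_countermono_coupling T])
qed

lemma ratio2_countermono_coupling_le:
  assumes obj: "\<And>x y. x > 0 \<Longrightarrow> y > 0 \<Longrightarrow> thm7_obj F x y \<le> S"
  shows "ratio2 (countermono_coupling F) \<le> ereal S"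
  unfolding ratio2_def
proof (rule SUP_least)
  fix T assume "T \<in> {T. pos_matrix T}"
  then have T: "pos_matrix T" by simp
  then have pos: "T 1 1 > 0" "T 1 2 > 0" "T 2 1 > 0" "T 2 2 > 0"
    unfolding pos_matrix_def by auto
  have "exp_makespan (countermono_coupling F) T \<le> S * opt_makespan T"
    unfolding exp_makespan_countermono_coupling[OF T] opt_makespan_eq_opt4[OF T]
    using pos_cdf_bounded[OF F] pos_cdf_small[OF F] obj by (intro instance_bound pos) auto
  moreover have "opt_makespan T > 0"
    unfolding opt_makespan_eq_opt4[OF T] using opt4_pos[OF pos] .
  ultimately show "ereal (exp_makespan (countermono_coupling F) T / opt_makespan T) \<le> ereal S"
    by (simp add: divide_le_eq)
qed

end

lemma R2_le_SUP_obj: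
  assumes "F \<in> G1_pos"
  shows "R2 \<le> (SUP xy\<in>{0<..} \<times> {0<..}. ereal (thm7_obj F (fst xy) (snd xy)))" (is "_ \<le> ?sup")
proof (cases "?sup = \<infinity>")
  case False
  have obj: "ereal (thm7_obj F x y) \<le> ?sup" if "x > 0" "y > 0" for x y
    using that by (intro SUP_upper2[of "(x, y)"]) auto
  have "?sup \<noteq> -\<infinity>" using obj[of 1 1] by auto
  with False obtain S where S: "?sup = ereal S" by (cases ?sup) auto
  have F: "pos_cdf F" using G1_posD[OF assms] .
  have "R2 \<le> ratio2 (countermono_coupling F)"
    unfolding R2_def by (rule INF_lower[OF countermono_coupling_in_P2[OF F]])
  also have "\<dots> \<le> ereal S"
    using obj unfolding S by (intro ratio2_countermono_coupling_le[OF F]) auto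
  finally show ?thesis unfolding S .
qed simp

lemma obj_le_ratio2:
  assumes P: "P \<in> P2" and x: "x > 0" and y: "y > 0"
  defines "F \<equiv> \<lambda>r. (measure P {z. fst z \<le> r} + measure P {z. snd z \<le> r}) / 2"
  shows "ereal (thm7_obj F x y) \<le> ratio2 P"
proof -
  have "prob_space P" "sets P = sets borel"
    using P unfolding P2_def by auto
  define F1 F2 where "F1 r = measure P {z. fst z \<le> r}" and "F2 r = measure P {z. snd z \<le> r}" for r
  define T1 T2 where "T1 = mat2 1 y (1/x) 1" and "T2 = mat2 y 1 1 (1/x)"
  have T: "pos_matrix T1" "pos_matrix T2"
    unfolding T1_def T2_def using x y by (auto intro: pos_matrix_mat2)
  have opt: "opt_makespan T1 \<le> 1" "opt_makespan T2 \<le> 1"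
    using opt_makespan_eq_opt4[OF T(1)] opt_makespan_eq_opt4[OF T(2)]
    unfolding T1_def T2_def opt4_def mat2_def by (simp_all add: min_le_iff_disj)
  have E1: "cm_makespan (F1 x) (F2 y) 1 y (1/x) 1 \<le> exp_makespan P T1"
    using cm_makespan_le_exp_makespan[OF \<open>prob_space P\<close> \<open>sets P = _\<close> T(1)] x
    unfolding T1_def F1_def F2_def mat2_def by simp
  have E2: "cm_makespan (F2 x) (F1 y) 1 y (1/x) 1 \<le> exp_makespan P T2"
    using cm_makespan_le_exp_makespan[OF \<open>prob_space P\<close> \<open>sets P = _\<close> T(2)] x cm_makespan_swap
    unfolding T2_def F1_def F2_def mat2_def by simp
  have "thm7_obj F x y \<le> (cm_makespan (F1 x) (F2 y) 1 y (1/x) 1 + cm_makespan (F2 x) (F1 y) 1 y (1/x) 1) / 2"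
    using cm_makespan_midpoint_convex[of 1 y "1/x" 1 "F1 x" "F2 x" "F2 y" "F1 y"] x y
    unfolding thm7_obj_eq_cm_makespan[OF x] F_def F1_def F2_def by (simp add: add.commute)
  also have "\<dots> \<le> (exp_makespan P T1 + exp_makespan P T2) / 2"
    using add_mono[OF E1 E2] by (rule divide_right_mono) simp
  finally have "thm7_obj F x y \<le> exp_makespan P T1 \<or> thm7_obj F x y \<le> exp_makespan P T2"
    by (cases "exp_makespan P T1 \<le> exp_makespan P T2") auto
  then show ?thesis
    using exp_makespan_le_ratio2[OF T(1) opt(1)] exp_makespan_le_ratio2[OF T(2) opt(2)]
    by (metis ereal_less_eq(3) order_trans)
qed

lemma INF_SUP_obj_le_ratio2:
  assumes P: "P \<in> P2"
  shows "(INF F\<in>G1_pos. SUP xy\<in>{0<..} \<times> {0<..}. ereal (thm7_obj F (fst xy) (snd xy))) \<le> ratio2 P"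
proof -
  let ?F = "\<lambda>r. (measure P {z. fst z \<le> r} + measure P {z. snd z \<le> r}) / 2"
  have "?F \<in> G1_pos"
    using marginal_cdf_in_G1_pos[OF P, of fst] marginal_cdf_in_G1_pos[OF P, of snd]
    by (simp add: G1_posI pos_cdf_midpoint G1_posD)
  moreover have "(SUP xy\<in>{0<..} \<times> {0<..}. ereal (thm7_obj ?F (fst xy) (snd xy))) \<le> ratio2 P"
    using obj_le_ratio2[OF P] by (intro SUP_least) auto
  ultimately show ?thesis by (fact INF_lower2)
qed

theorem theorem7:
  shows "R2 = (INF F\<in>G1_pos. SUP xy\<in>{0<..} \<times> {0<..}. ereal (thm7_obj F (fst xy) (snd xy)))"
proof (rule antisym)
  show "R2 \<le> (INF F\<in>G1_pos. SUP xy\<in>{0<..} \<times> {0<..}. ereal (thm7_obj F (fst xy) (snd xy)))"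
    by (rule INF_greatest) (rule R2_le_SUP_obj)
  show "(INF F\<in>G1_pos. SUP xy\<in>{0<..} \<times> {0<..}. ereal (thm7_obj F (fst xy) (snd xy))) \<le> R2"
    unfolding R2_def by (rule INF_greatest) (rule INF_SUP_obj_le_ratio2)
qed

end
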